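(* Let $\omega$ be a clustering state. Then the sesquilinear form $\langle A,B\rangle_\omega:=\sum_{x\in\mathbb Z^D}\big(\omega(\iota_x(A)^*B)-\omega(A^* )\omega(B)\big)$ on $\mathcal O$ is positive semi-definite: $\langle A,A\rangle_\omega\ge0$ for all $A\in\mathcal O$.
   Context: Setting: Fix an integer $D\ge1$ and $\mathbb Z^D$ with $\mathrm{dist}(x,y)=\sum_i|x_i-y_i|$. $\mathcal O$ is a complex normed space with distinguished $\mathbf 1$ of norm 1; finite-dimensional subspaces $\mathcal O_X$ for finite $X\subset\mathbb Z^D$ with $\mathcal O_\emptyset=\mathbb C\mathbf 1$, $X\subset Y\Rightarrow\mathcal O_X\subset\mathcal O_Y$, $\mathcal O_X\cap\mathcal O_Y=\mathcal O_{X\cap Y}$, $\mathcal O=\bigcup_X\mathcal O_X$; $\mathrm{supp}(A)$ is the smallest $X$ with $A\in\mathcal O_X$, $|A|:=|\mathrm{supp}(A)|$, $\mathrm{dist}(A,B)$ the distance between supports ($\mathrm{dist}(A,\mathbf 1)=\infty$). The completion $\mathcal A$ is a unital $C^*$-algebra, each $\mathcal O_X$ a $C^*$-subalgebra, elements with disjoint supports commute and the support of their product is the union. Translations $\iota_x$ ($x\in\mathbb Z^D$) are $*$-automorphisms of $\mathcal A$ with $\iota_x\iota_y=\iota_{x+y}$ and $\mathrm{supp}(\iota_x(A))=\mathrm{supp}(A)+x$. A state is a positive linear functional $\omega$ on $\mathcal A$ with $\omega(\mathbf 1)=1$. A clustering state is a translation-invariant state ($\omega\circ\iota_x=\omega$)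 for which there exist $\nu:\mathbb N\to\mathbb R^+$, $f:\mathbb Z\to\mathbb R^+$ and $p>D$ with $f(d)\le d^{-p}$ for $d>0$, such that $|\omega(AB)-\omega(A)\omega(B)|\le\nu(\ell)\|A\|\|B\|f(\mathrm{dist}(A,B))$ for all $\ell\in\mathbb N$ and $A,B\in\mathcal O$ with $|A|,|B|<\ell$. (The series defining the form converges absolutely for such $\omega$.) *)

theory Defs
  imports "HOL-Analysis.Analysis"
begin

text \<open>Lattice Z^D is modelled as int^'d with D = CARD('d) (finite type, so D \<ge> 1).
  The C*-algebra \<A> (completion of O) is the ambient type 'a, a real Banach algebra
  with unit, equipped with a complex scalar multiplication csmult and an involution star.\<close>

definition l1dist :: "int^'d \<Rightarrow> int^'d \<Rightarrow> nat" where
  "l1dist x y = nat (\<Sum>i\<in>UNIV. \<bar>x$i - y$i\<bar>)"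

definition obs :: "((int^'d) set \<Rightarrow> 'a set) \<Rightarrow> 'a set" where
  "obs Ob = \<Union>{Ob X | X. finite X}"

definition supp :: "((int^'d) set \<Rightarrow> 'a set) \<Rightarrow> 'a \<Rightarrow> (int^'d) set" where
  "supp Ob A = (THE X. finite X \<and> A \<in> Ob X \<and> (\<forall>Y. finite Y \<and> A \<in> Ob Y \<longrightarrow> X \<subseteq> Y))"

text \<open>distance between supports (only used when both supports are nonempty)\<close>
definition supp_dist :: "((int^'d) set \<Rightarrow> 'a set) \<Rightarrow> 'a \<Rightarrow> 'a \<Rightarrow> nat" where
  "supp_dist Ob A B = Min {l1dist x y | x y. x \<in> supp Ob A \<and> y \<in> supp Ob B}"

locale quasi_local_cstar =
  fixes csmult :: "complex \<Rightarrow> 'a::{real_normed_algebra_1, banach} \<Rightarrow> 'a"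
    and star :: "'a \<Rightarrow> 'a"
    and Ob :: "(int^'d) set \<Rightarrow> 'a set"
    and iota :: "int^'d \<Rightarrow> 'a \<Rightarrow> 'a"
  assumes smult_of_real: "csmult (complex_of_real r) a = r *\<^sub>R a"
    and smult_assoc: "csmult (c * d) a = csmult c (csmult d a)"
    and smult_add_left: "csmult (c + d) a = csmult c a + csmult d a"
    and smult_add_right: "csmult c (a + b) = csmult c a + csmult c b"
    and smult_mult_left: "csmult c (a * b) = csmult c a * b"
    and smult_mult_right: "csmult c (a * b) = a * csmult c b"
    and norm_smult: "norm (csmult c a) = cmod c * norm a"
    and star_star: "star (star a) = a"
    and star_add: "star (a + b) = star a + star b"
    and star_smult: "star (csmult c a) = csmult (cnj c) (star a)"
    and star_mult: "star (a * b) = star b * star a"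
    and cstar_identity: "norm (star a * a) = (norm a)\<^sup>2"
    and O_findim: "finite X \<Longrightarrow> \<exists>B. finite B \<and> B \<subseteq> Ob X \<and>
                      Ob X = {\<Sum>b\<in>B. csmult (c b) b | c. True}"
    and O_one: "finite X \<Longrightarrow> 1 \<in> Ob X"
    and O_mult: "finite X \<Longrightarrow> a \<in> Ob X \<Longrightarrow> b \<in> Ob X \<Longrightarrow> a * b \<in> Ob X"
    and O_star: "finite X \<Longrightarrow> a \<in> Ob X \<Longrightarrow> star a \<in> Ob X"
    and O_empty: "Ob {} = range (\<lambda>c. csmult c 1)"
    and O_mono: "finite Y \<Longrightarrow> X \<subseteq> Y \<Longrightarrow> Ob X \<subseteq> Ob Y"
    and O_inter: "finite X \<Longrightarrow> finite Y \<Longrightarrow> Ob X \<inter> Ob Y = Ob (X \<inter> Y)"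
    and obs_dense: "closure (obs Ob) = UNIV"
    and disjoint_commute: "A \<in> obs Ob \<Longrightarrow> B \<in> obs Ob \<Longrightarrow> supp Ob A \<inter> supp Ob B = {} \<Longrightarrow>
        A * B = B * A \<and> (A \<noteq> 0 \<and> B \<noteq> 0 \<longrightarrow> supp Ob (A * B) = supp Ob A \<union> supp Ob B)"
    and iota_add: "iota x (a + b) = iota x a + iota x b"
    and iota_smult: "iota x (csmult c a) = csmult c (iota x a)"
    and iota_mult: "iota x (a * b) = iota x a * iota x b"
    and iota_star: "iota x (star a) = star (iota x a)"
    and iota_one: "iota x 1 = 1"
    and iota_bij: "bij (iota x)"
    and iota_comp: "iota x \<circ> iota y = iota (x + y)"
    and iota_supp: "A \<in> obs Ob \<Longrightarrow>
        iota x A \<in> obs Ob \<and> supp Ob (iota x A) = (\<lambda>y. y + x) ` supp Ob A"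

definition is_state :: "(complex \<Rightarrow> 'a \<Rightarrow> 'a) \<Rightarrow> ('a \<Rightarrow> 'a) \<Rightarrow> ('a::real_normed_algebra_1 \<Rightarrow> complex) \<Rightarrow> bool" where
  "is_state csmult star \<omega> \<longleftrightarrow>
     (\<forall>a b. \<omega> (a + b) = \<omega> a + \<omega> b) \<and>
     (\<forall>c a. \<omega> (csmult c a) = c * \<omega> a) \<and>
     (\<forall>a. Im (\<omega> (star a * a)) = 0 \<and> Re (\<omega> (star a * a)) \<ge> 0) \<and>
     \<omega> 1 = 1"

definition clustering_state ::
  "(complex \<Rightarrow> 'a \<Rightarrow> 'a) \<Rightarrow> ('a \<Rightarrow> 'a) \<Rightarrow> ((int^'d) set \<Rightarrow> 'a set) \<Rightarrow> (int^'d \<Rightarrow> 'a \<Rightarrow> 'a)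
     \<Rightarrow> ('a::real_normed_algebra_1 \<Rightarrow> complex) \<Rightarrow> bool" where
  "clustering_state csmult star Ob iota \<omega> \<longleftrightarrow>
     is_state csmult star \<omega> \<and>
     (\<forall>x a. \<omega> (iota x a) = \<omega> a) \<and>
     (\<exists>(\<nu>::nat \<Rightarrow> real) (f::int \<Rightarrow> real) (p::real).
        (\<forall>l. \<nu> l > 0) \<and> (\<forall>d. f d > 0) \<and> p > real CARD('d) \<and>
        (\<forall>d>0. f d \<le> real_of_int d powr (-p)) \<and>
        (\<forall>l A B. A \<in> obs Ob \<and> B \<in> obs Ob \<and> card (supp Ob A) < l \<and> card (supp Ob B) < l \<and>
            supp Ob A \<noteq> {} \<and> supp Ob B \<noteq> {} \<longrightarrow>
            cmod (\<omega> (A * B) - \<omega> A * \<omega> B)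
              \<le> \<nu> l * norm A * norm B * f (int (supp_dist Ob A B))))"

end

theory Submission
  imports Defs
begin

text \<open>
  Let g(x) = omega(iota_x(A)^* A) - omega(A^*) omega(A). Translation invariance and the
  recentring A0 = A - omega(A) 1 turn the Gram sums of g into states of positive elements:
  sum_{x,y in L} g(x - y) = omega(B^* B) >= 0 for B = sum_{x in L} iota_x(A0), so g is a
  positive-definite function on Z^D. Clustering makes g decay like |x|^(-p) with p > D, hence
  g is absolutely summable; the translates iota_x(A) are uniformly bounded because A^* A
  satisfies a polynomial relation in the finite-dimensional algebra O_X, and that relation
  bounds the norm of every self-adjoint translate. For an absolutely summable positive-definite
  g, the averaged Gram sums n^(-D) sum_{x,y} g(x - y) over the cubes [0,n)^D are nonnegative
  and converge to sum_x g(x): all but a vanishing fraction of the shifted cubes contain any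
  given finite set.
\<close>

definition l1norm :: "int^'d \<Rightarrow> int" where
  "l1norm x = (\<Sum>i\<in>UNIV. \<bar>x$i\<bar>)"

definition l1diam :: "(int^'d) set \<Rightarrow> nat" where
  "l1diam S = Max {l1dist y z | y z. y \<in> S \<and> z \<in> S}"

definition lattice_box :: "int \<Rightarrow> int \<Rightarrow> (int^'d) set" where
  "lattice_box a b = {x. \<forall>i. a \<le> x$i \<and> x$i < b}"

definition Gram_sum :: "(int^'d \<Rightarrow> 'b::comm_monoid_add) \<Rightarrow> (int^'d) set \<Rightarrow> 'b" where
  "Gram_sum g L = (\<Sum>y\<in>L. \<Sum>x\<in>L. g (x - y))"

lemma lattice_box_eq_image: "lattice_box a b = vec_lambda ` PiE UNIV (\<lambda>_. {a..<b})"
proof -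
  have "x \<in> vec_lambda ` PiE UNIV (\<lambda>_. {a..<b})" if "x \<in> lattice_box a b" for x :: "int^'d"
    using that by (intro image_eqI[of _ _ "vec_nth x"]) (auto simp: lattice_box_def)
  then show ?thesis by (auto simp: lattice_box_def)
qed

lemma finite_lattice_box [simp]: "finite (lattice_box a b)"
  by (simp add: lattice_box_eq_image finite_PiE)

lemma card_lattice_box: "card (lattice_box a b :: (int^'d) set) = nat (b - a) ^ CARD('d)"
proof -
  have "inj_on (vec_lambda :: ('d \<Rightarrow> int) \<Rightarrow> int^'d) (PiE UNIV (\<lambda>_. {a..<b}))"
    by (rule inj_onI) (metis vec_lambda_inverse UNIV_I)
  then show ?thesis by (simp add: lattice_box_eq_image card_image card_PiE)
qed

lemma lattice_box_mono: "a \<le> a' \<Longrightarrow> b' \<le> b \<Longrightarrow> lattice_box a' b' \<subseteq> lattice_box a b"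
proof (clarsimp simp: lattice_box_def)
  fix x :: "int^'d" and i
  assume "a \<le> a'" "b' \<le> b" "\<forall>i. a' \<le> x$i \<and> x$i < b'"
  then show "a \<le> x$i \<and> x$i < b" by (meson order_trans less_le_trans)
qed

lemma abs_le_l1norm: "\<bar>x$i\<bar> \<le> l1norm x"
  unfolding l1norm_def by (rule member_le_sum) auto

lemma finite_l1norm_le: "finite {x::int^'d. l1norm x \<le> r}"
proof (rule finite_subset)
  show "{x::int^'d. l1norm x \<le> r} \<subseteq> lattice_box (- r) (r + 1)"
  proof
    fix x :: "int^'d" assume "x \<in> {x. l1norm x \<le> r}"
    then have "\<bar>x$i\<bar> \<le> r" for i using abs_le_l1norm[of x i] by simp
    then have "- r \<le> x$i \<and> x$i < r + 1" for i by (smt (verit))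
    then show "x \<in> lattice_box (- r) (r + 1)" by (simp add: lattice_box_def)
  qed
qed simp

lemma finite_coordinates_bounded:
  fixes F :: "(int^'d) set"
  assumes "finite F"
  obtains R :: nat where "\<And>z i. z \<in> F \<Longrightarrow> \<bar>z$i\<bar> \<le> int R"
proof
  fix z i assume "z \<in> F"
  have "\<bar>z$i\<bar> \<le> l1norm z" by (rule abs_le_l1norm)
  also have "\<dots> \<le> (\<Sum>z\<in>F. l1norm z)"
    using assms \<open>z \<in> F\<close> by (intro member_le_sum) (auto simp: l1norm_def intro: sum_nonneg)
  finally show "\<bar>z$i\<bar> \<le> int (nat (\<Sum>z\<in>F. l1norm z))" by linarith
qed

lemma l1dist_translate_ge: "l1norm x - int (l1dist y z) \<le> int (l1dist (y + x) z)"
proof -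
  have "\<bar>x$i\<bar> - \<bar>y$i - z$i\<bar> \<le> \<bar>y$i + x$i - z$i\<bar>" for i
    by linarith
  then have "l1norm x - (\<Sum>i\<in>UNIV. \<bar>y$i - z$i\<bar>) \<le> (\<Sum>i\<in>UNIV. \<bar>y$i + x$i - z$i\<bar>)"
    unfolding l1norm_def by (simp add: sum_subtractf[symmetric] sum_mono)
  then show ?thesis by (simp add: l1dist_def sum_nonneg)
qed

lemma Min_l1dist_translate_ge:
  assumes "finite S" "S \<noteq> {}"
  shows "l1norm x - int (l1diam S) \<le> int (Min {l1dist y z | y z. y \<in> (\<lambda>y. y + x) ` S \<and> z \<in> S})"
proof -
  have eq: "{l1dist y z | y z. y \<in> (\<lambda>y. y + x) ` S \<and> z \<in> S} = (\<lambda>(y, z). l1dist (y + x) z) ` (S \<times> S)"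
    by auto
  have "Min {l1dist y z | y z. y \<in> (\<lambda>y. y + x) ` S \<and> z \<in> S} \<in> (\<lambda>(y, z). l1dist (y + x) z) ` (S \<times> S)"
    unfolding eq using assms by (intro Min_in) auto
  then obtain y z where yz: "y \<in> S" "z \<in> S"
    and Min_eq: "Min {l1dist y z | y z. y \<in> (\<lambda>y. y + x) ` S \<and> z \<in> S} = l1dist (y + x) z"
    by auto
  have "finite {l1dist y z | y z. y \<in> S \<and> z \<in> S}"
  proof -
    have "{l1dist y z | y z. y \<in> S \<and> z \<in> S} = (\<lambda>(y, z). l1dist y z) ` (S \<times> S)"
      by auto
    then show ?thesis using assms by simp
  qed
  then have "l1dist y z \<le> l1diam S"
    unfolding l1diam_def using yz by (intro Max_ge) auto
  then show ?thesis
    using l1dist_translate_ge[of x y z] Min_eq by linarith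
qed

lemma summable_on_powr_abs_int:
  fixes q :: real
  assumes "q > 1"
  shows "(\<lambda>n::int. (1 + real_of_int \<bar>n\<bar>) powr (-q)) summable_on UNIV"
proof -
  let ?h = "\<lambda>n::int. (1 + real_of_int \<bar>n\<bar>) powr (-q)"
  have "summable (\<lambda>n::nat. real n powr (-q))"
    using assms by (subst summable_real_powr_iff) auto
  then have "summable (\<lambda>n::nat. (1 + real n) powr (-q))"
    by (subst (asm) summable_Suc_iff[symmetric]) (simp add: add.commute)
  then have nat: "(\<lambda>n::nat. (1 + real n) powr (-q)) summable_on UNIV"
    by (rule summable_nonneg_imp_summable_on) auto
  have "?h summable_on range int"
    by (subst summable_on_reindex) (use nat in \<open>auto simp: o_def\<close>)
  moreover have "?h summable_on range (\<lambda>n. - int n)"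
    by (subst summable_on_reindex) (use nat in \<open>auto simp: o_def inj_on_def\<close>)
  moreover have "UNIV = range int \<union> range (\<lambda>n. - int n)"
    by (auto simp: image_def) (metis int_cases2)
  ultimately show ?thesis by (metis summable_on_union)
qed

lemma summable_on_prod_powr_abs_vec:
  fixes q :: real
  assumes "q > 1"
  shows "(\<lambda>x::int^'d. \<Prod>i\<in>UNIV. (1 + real_of_int \<bar>x$i\<bar>) powr (-q)) summable_on UNIV"
proof -
  let ?h = "\<lambda>n::int. (1 + real_of_int \<bar>n\<bar>) powr (-q)"
  have "Infinite_Set_Sum.abs_summable_on ?h UNIV"
    using summable_on_powr_abs_int[OF assms] by (simp flip: abs_summable_equivalent)
  then have "Infinite_Set_Sum.abs_summable_on (\<lambda>g::'d\<Rightarrow>int. \<Prod>i\<in>UNIV. ?h (g i)) (PiE UNIV (\<lambda>_. UNIV))"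
    by (intro abs_summable_on_prod_PiE) auto
  then have "(\<lambda>g::'d\<Rightarrow>int. \<Prod>i\<in>UNIV. ?h (g i)) summable_on UNIV"
    by (simp flip: abs_summable_equivalent add: abs_summable_summable)
  moreover have "range (vec_nth :: int^'d \<Rightarrow> 'd \<Rightarrow> int) = UNIV"
    by (rule surjI[of _ vec_lambda]) (simp add: fun_eq_iff)
  ultimately have "(\<lambda>g::'d\<Rightarrow>int. \<Prod>i\<in>UNIV. ?h (g i)) summable_on range vec_nth"
    by simp
  then show ?thesis
    by (subst (asm) summable_on_reindex) (auto simp: inj_on_def vec_eq_iff o_def)
qed

lemma powr_le_prod_powr_abs:
  fixes x :: "int^'d" and p r :: real
  assumes p: "p > 0" and x: "l1norm x \<ge> 1" and r: "r \<ge> l1norm x / 2"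
  shows "r powr (-p) \<le> 4 powr p * (\<Prod>i\<in>UNIV. (1 + real_of_int \<bar>x$i\<bar>) powr (-p / CARD('d)))"
proof -
  define n where "n = real_of_int (l1norm x)"
  have n: "n \<ge> 1" using x by (simp add: n_def)
  have "r powr (-p) \<le> ((1 + n) / 4) powr (-p)"
    using r n p unfolding n_def by (intro powr_mono2') auto
  also have "\<dots> = 4 powr p * ((1 + n) ^ CARD('d)) powr (-p / CARD('d))"
    using n by (simp add: powr_divide powr_minus divide_simps powr_powr flip: powr_realpow)
  also have "((1 + n) ^ CARD('d)) powr (-p / CARD('d))
      \<le> (\<Prod>i\<in>UNIV. 1 + real_of_int \<bar>x$i\<bar>) powr (-p / CARD('d))"
  proof (rule powr_mono2')
    have "1 + real_of_int \<bar>x$i\<bar> \<le> 1 + n" for i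
      using abs_le_l1norm[of x i] by (simp add: n_def)
    then show "(\<Prod>i\<in>UNIV. 1 + real_of_int \<bar>x$i\<bar>) \<le> (1 + n) ^ CARD('d)"
      using prod_mono[of UNIV "\<lambda>i. 1 + real_of_int \<bar>x$i\<bar>" "\<lambda>_. 1 + n"] by simp
  qed (use p in \<open>auto intro: prod_pos simp: divide_nonpos_pos\<close>)
  finally show ?thesis
    by (simp add: prod_powr_distrib mult_left_mono)
qed

lemma summable_on_if_norm_bounded_off_finite:
  fixes f :: "'a \<Rightarrow> complex"
  assumes E: "finite E" and h: "h summable_on UNIV" and bound: "\<And>x. x \<notin> E \<Longrightarrow> norm (f x) \<le> h x"
  shows "f summable_on UNIV"
proof -
  have "(\<lambda>x. norm (f x)) summable_on (UNIV - E)"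
    by (rule summable_on_comparison_test[OF summable_on_subset[OF h]]) (use bound in auto)
  then have "f summable_on (UNIV - E)" by (rule abs_summable_summable)
  moreover have "f summable_on E" using E by simp
  ultimately show ?thesis using summable_on_union[of f "UNIV - E" E] by simp
qed

lemma power_sub_power_le:
  fixes a b :: real
  assumes "0 \<le> b" "b \<le> a"
  shows "a ^ k - (a - b) ^ k \<le> real k * b * a ^ (k - 1)"
proof (induction k)
  case (Suc k)
  have "a ^ Suc k - (a - b) ^ Suc k = a * (a ^ k - (a - b) ^ k) + b * (a - b) ^ k"
    by (simp add: algebra_simps)
  also have "\<dots> \<le> a * (real k * b * a ^ (k - 1)) + b * a ^ k"
    using Suc assms by (intro add_mono mult_left_mono power_mono) auto
  also have "\<dots> = real (Suc k) * b * a ^ k"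
    by (cases k) (simp_all add: algebra_simps)
  finally show ?case by simp
qed simp

lemma subset_shifted_lattice_box:
  assumes F: "\<And>z i. z \<in> F \<Longrightarrow> \<bar>z$i\<bar> \<le> int R" and y: "y \<in> lattice_box (int R) (int n - int R)"
  shows "F \<subseteq> (\<lambda>x. x - y) ` lattice_box 0 (int n)"
proof
  fix z assume z: "z \<in> F"
  have "0 \<le> (z + y)$i \<and> (z + y)$i < int n" for i
  proof -
    have "int R \<le> y$i" "y$i < int n - int R" using y by (auto simp: lattice_box_def)
    with F[OF z, of i] show ?thesis by (simp add: abs_le_iff)
  qed
  then have "z + y \<in> lattice_box 0 (int n)" by (simp add: lattice_box_def)
  then show "z \<in> (\<lambda>x. x - y) ` lattice_box 0 (int n)" by (intro image_eqI[of _ _ "z + y"]) auto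
qed

lemma card_lattice_box_margin_le:
  fixes n R :: nat
  assumes "2 * R \<le> n"
  shows "real (card (lattice_box 0 (int n) - lattice_box (int R) (int n - int R) :: (int^'d) set))
    \<le> real CARD('d) * (2 * real R) * real n ^ (CARD('d) - 1)"
proof -
  have "lattice_box (int R) (int n - int R) \<subseteq> (lattice_box 0 (int n) :: (int^'d) set)"
    by (rule lattice_box_mono) auto
  then have "real (card (lattice_box 0 (int n) - lattice_box (int R) (int n - int R) :: (int^'d) set))
      = real n ^ CARD('d) - (real n - 2 * real R) ^ CARD('d)"
    using assms by (simp add: card_Diff_subset card_mono card_lattice_box of_nat_diff nat_diff_distrib)
  also have "\<dots> \<le> real CARD('d) * (2 * real R) * real n ^ (CARD('d) - 1)"
    using power_sub_power_le[of "2 * real R" "real n" "CARD('d)"] assms by simp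
  finally show ?thesis .
qed

lemma norm_Gram_sum_cube_le:
  fixes g :: "int^'d \<Rightarrow> 'b::real_normed_vector" and n R :: nat
  assumes approx: "\<And>Y. finite Y \<Longrightarrow> F \<subseteq> Y \<Longrightarrow> norm (S - sum g Y) \<le> \<epsilon>"
    and bounded: "\<And>Y. finite Y \<Longrightarrow> norm (S - sum g Y) \<le> 2 * G"
    and F: "\<And>z i. z \<in> F \<Longrightarrow> \<bar>z$i\<bar> \<le> int R"
    and n: "2 * R \<le> n" and \<epsilon>: "0 \<le> \<epsilon>"
  shows "norm (real n ^ CARD('d) *\<^sub>R S
            - Gram_sum g (lattice_box 0 (int n)))
         \<le> real n ^ CARD('d) * \<epsilon> + real CARD('d) * (2 * real R) * real n ^ (CARD('d) - 1) * (2 * G)"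
proof -
  define C :: "(int^'d) set" where "C = lattice_box 0 (int n)"
  define I :: "(int^'d) set" where "I = lattice_box (int R) (int n - int R)"
  define dev where "dev y = norm (S - (\<Sum>x\<in>C. g (x - y)))" for y
  have IC: "I \<subseteq> C" unfolding I_def C_def by (rule lattice_box_mono) auto
  have shift: "(\<Sum>x\<in>C. g (x - y)) = sum g ((\<lambda>x. x - y) ` C)" for y
    by (subst sum.reindex) (auto simp: inj_on_def)
  have F_shift: "F \<subseteq> (\<lambda>x. x - y) ` C" if "y \<in> I" for y
    using subset_shifted_lattice_box[OF F] that by (simp add: C_def I_def)
  have dev_I: "dev y \<le> \<epsilon>" if "y \<in> I" for y
    unfolding dev_def shift by (rule approx) (simp_all add: C_def F_shift[OF that, unfolded C_def])
  have "0 \<le> 2 * G" using bounded[of "{}"] norm_ge_zero order_trans by blast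
  have dev_bounded: "dev y \<le> 2 * G" for y
    unfolding dev_def shift by (rule bounded) (simp add: C_def)
  have "real (card C) *\<^sub>R S - (\<Sum>y\<in>C. \<Sum>x\<in>C. g (x - y)) = (\<Sum>y\<in>C. S - (\<Sum>x\<in>C. g (x - y)))"
    by (simp add: sum_subtractf sum_constant_scaleR)
  then have "norm (real (card C) *\<^sub>R S - (\<Sum>y\<in>C. \<Sum>x\<in>C. g (x - y))) \<le> sum dev C"
    unfolding dev_def by (simp add: norm_sum)
  also have "\<dots> = sum dev I + sum dev (C - I)"
    using IC by (simp add: C_def sum.subset_diff)
  also have "\<dots> \<le> real (card I) * \<epsilon> + real (card (C - I)) * (2 * G)"
    using dev_I dev_bounded sum_bounded_above[of I dev \<epsilon>] sum_bounded_above[of "C - I" dev "2 * G"]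
    by (intro add_mono) simp_all
  also have "\<dots> \<le> real (card C) * \<epsilon> + real CARD('d) * (2 * real R) * real n ^ (CARD('d) - 1) * (2 * G)"
  proof (intro add_mono)
    show "real (card I) * \<epsilon> \<le> real (card C) * \<epsilon>"
      using IC \<epsilon> by (intro mult_right_mono) (auto simp: C_def card_mono)
    have "real (card (C - I)) \<le> real CARD('d) * (2 * real R) * real n ^ (CARD('d) - 1)"
      using card_lattice_box_margin_le[OF n] by (simp add: C_def I_def)
    then show "real (card (C - I)) * (2 * G) \<le> real CARD('d) * (2 * real R) * real n ^ (CARD('d) - 1) * (2 * G)"
      using \<open>0 \<le> 2 * G\<close> by (rule mult_right_mono)
  qed
  also have "real (card C) = real n ^ CARD('d)" by (simp add: C_def card_lattice_box)
  finally show ?thesis by (simp only: C_def Gram_sum_def)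
qed

lemma norm_Gram_average_cube_le:
  fixes g :: "int^'d \<Rightarrow> 'b::real_normed_vector" and n R :: nat and \<epsilon> G :: real
  assumes approx: "\<And>Y. finite Y \<Longrightarrow> F \<subseteq> Y \<Longrightarrow> norm (S - sum g Y) \<le> \<epsilon>"
    and bounded: "\<And>Y. finite Y \<Longrightarrow> norm (S - sum g Y) \<le> 2 * G"
    and F: "\<And>z i. z \<in> F \<Longrightarrow> \<bar>z$i\<bar> \<le> int R"
    and n: "2 * R < n" "4 * real R * real CARD('d) * G \<le> \<epsilon> * real n" and \<epsilon>: "0 \<le> \<epsilon>"
  shows "norm (inverse (real n ^ CARD('d)) *\<^sub>R
            Gram_sum g (lattice_box 0 (int n)) - S) \<le> 2 * \<epsilon>"
proof -
  define T where "T = Gram_sum g (lattice_box 0 (int n))"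
  define D where "D = CARD('d)"
  define N where "N = real n ^ D"
  have N: "N > 0" using n by (simp add: N_def)
  have "(4 * R * D * G) * real n ^ (D - 1) \<le> (\<epsilon> * n) * real n ^ (D - 1)"
    using n by (intro mult_right_mono) (simp_all add: D_def)
  moreover have "real n * real n ^ (D - 1) = N"
    unfolding N_def D_def by (simp flip: power_Suc)
  ultimately have margin: "real D * (2 * real R) * real n ^ (D - 1) * (2 * G) \<le> N * \<epsilon>"
    by (simp add: algebra_simps)
  have "norm (N *\<^sub>R S - T) \<le> N * \<epsilon> + real D * (2 * real R) * real n ^ (D - 1) * (2 * G)"
    unfolding T_def N_def D_def
    by (rule norm_Gram_sum_cube_le[where F = F]) (use approx bounded F n \<epsilon> in auto)
  with margin have "norm (N *\<^sub>R S - T) \<le> N * (2 * \<epsilon>)" by simp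
  moreover have "inverse N *\<^sub>R T - S = - (inverse N *\<^sub>R (N *\<^sub>R S - T))"
    using N by (simp add: algebra_simps)
  ultimately have "norm (inverse N *\<^sub>R T - S) \<le> inverse N * (N * (2 * \<epsilon>))"
    using N by (simp only: norm_minus_cancel norm_scaleR) (simp add: mult_left_mono)
  also have "inverse N * (N * (2 * \<epsilon>)) = 2 * \<epsilon>"
    using N by (simp add: field_simps)
  finally show ?thesis unfolding T_def N_def D_def .
qed

lemma Gram_average_cube_tendsto:
  fixes g :: "int^'d \<Rightarrow> 'b::banach"
  assumes abs_summable: "(\<lambda>x. norm (g x)) summable_on UNIV"
  shows "(\<lambda>n. inverse (real n ^ CARD('d)) *\<^sub>R
            Gram_sum g (lattice_box 0 (int n)))
         \<longlonglongrightarrow> infsum g UNIV"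
proof (rule LIMSEQ_I)
  fix r :: real assume "r > 0"
  define \<epsilon> where "\<epsilon> = r / 3"
  define S where "S = infsum g UNIV"
  define G where "G = infsum (\<lambda>x. norm (g x)) UNIV"
  have \<epsilon>: "\<epsilon> > 0" using \<open>r > 0\<close> by (simp add: \<epsilon>_def)
  have "(g has_sum S) UNIV"
    using abs_summable_summable[OF abs_summable] by (simp add: S_def)
  then have "\<forall>\<^sub>F Y in finite_subsets_at_top UNIV. dist (sum g Y) S < \<epsilon>"
    using \<epsilon> unfolding has_sum_def by (rule tendstoD)
  then obtain F where F: "finite F" and approx: "\<And>Y. finite Y \<Longrightarrow> F \<subseteq> Y \<Longrightarrow> norm (S - sum g Y) \<le> \<epsilon>"
    unfolding eventually_finite_subsets_at_top by (metis dist_norm norm_minus_commute less_imp_le subset_UNIV)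
  have "norm S \<le> G"
    unfolding S_def G_def using abs_summable by (intro norm_infsum_bound) simp
  moreover have "norm (sum g Y) \<le> G" if "finite Y" for Y
    using norm_sum[of g Y] finite_sum_le_infsum[OF abs_summable that] by (simp add: G_def)
  ultimately have bounded: "norm (S - sum g Y) \<le> 2 * G" if "finite Y" for Y
    using norm_triangle_ineq4[of S "sum g Y"] that by fastforce
  obtain R where F_R: "\<And>z i. z \<in> F \<Longrightarrow> \<bar>z$i\<bar> \<le> int R"
    using finite_coordinates_bounded[OF F] by blast
  define n0 where "n0 = 2 * R + 1 + nat \<lceil>4 * R * CARD('d) * G / \<epsilon>\<rceil>"
  have close: "norm (inverse (real n ^ CARD('d)) *\<^sub>R
          Gram_sum g (lattice_box 0 (int n)) - S) \<le> 2 * \<epsilon>"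
    if "n0 \<le> n" for n
  proof (rule norm_Gram_average_cube_le[OF approx bounded F_R])
    have "4 * R * CARD('d) * G / \<epsilon> \<le> real n"
      using that real_nat_ceiling_ge[of "4 * R * CARD('d) * G / \<epsilon>"] unfolding n0_def by linarith
    then show "4 * real R * real CARD('d) * G \<le> \<epsilon> * real n"
      using \<epsilon> by (simp add: divide_le_eq mult.commute)
  qed (use that \<epsilon> in \<open>auto simp: n0_def\<close>)
  show "\<exists>n0. \<forall>n\<ge>n0. norm (inverse (real n ^ CARD('d)) *\<^sub>R
      Gram_sum g (lattice_box 0 (int n)) - S) < r"
  proof (intro exI[of _ n0] allI impI)
    fix n assume "n0 \<le> n"
    with close[of n] \<open>r > 0\<close> show "norm (inverse (real n ^ CARD('d)) *\<^sub>R
      Gram_sum g (lattice_box 0 (int n)) - S) < r"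
      unfolding \<epsilon>_def by linarith
  qed
qed

lemma closed_nonneg_complex: "closed {z::complex. 0 \<le> z}"
  by (simp add: less_eq_complex_def Collect_conj_eq closed_Int closed_Collect_eq closed_Collect_le
      continuous_on_Re continuous_on_Im)

lemma infsum_nonneg_if_Gram_sums_nonneg:
  fixes g :: "int^'d \<Rightarrow> complex"
  assumes summable: "g summable_on UNIV"
    and Gram: "\<And>L. finite L \<Longrightarrow> 0 \<le> Gram_sum g L"
  shows "0 \<le> infsum g UNIV"
proof -
  have "infsum g UNIV \<in> {z. 0 \<le> z}"
  proof (rule Lim_in_closed_set[OF closed_nonneg_complex _ _ Gram_average_cube_tendsto])
    show "(\<lambda>x. norm (g x)) summable_on UNIV"
      using summable summable_on_iff_abs_summable_on_complex by blast
  qed (simp_all add: Gram scaleR_nonneg_nonneg)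
  then show ?thesis by simp
qed

lemma (in module) span_image_representation:
  assumes "finite A" "x \<in> span (f ` A)"
  shows "\<exists>c. x = (\<Sum>i\<in>A. scale (c i) (f i))"
  using assms(2)
proof (induction rule: span_induct_alt)
  case base
  show ?case by (intro exI[of _ "\<lambda>_. 0"]) simp
next
  case (step r v y)
  then obtain a c where a: "a \<in> A" "v = f a" and y: "y = (\<Sum>i\<in>A. scale (c i) (f i))" by blast
  have "scale r v + y = (\<Sum>i\<in>A. scale (if i = a then r else 0) (f i)) + y"
    using a assms(1) by (simp add: if_distrib[of "\<lambda>r. scale r _"] sum.delta cong: if_cong)
  also have "\<dots> = (\<Sum>i\<in>A. scale (c i + (if i = a then r else 0)) (f i))"
    by (simp add: y scale_left_distrib sum.distrib add.commute)
  finally show ?case by (rule exI[of _ "\<lambda>i. c i + (if i = a then r else 0)"])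
qed

lemma (in vector_space) linear_recurrence_if_in_finite_span:
  fixes f :: "nat \<Rightarrow> 'b"
  assumes B: "finite B" and f: "\<And>i. f i \<in> span B"
  shows "\<exists>d c. f d = (\<Sum>i<d. scale (c i) (f i))"
proof (rule ccontr)
  assume no_recurrence: "\<nexists>d c. f d = (\<Sum>i<d. scale (c i) (f i))"
  have new: "f d \<notin> span (f ` {..<d})" for d
  proof
    assume "f d \<in> span (f ` {..<d})"
    then obtain c where "f d = (\<Sum>i<d. scale (c i) (f i))"
      using span_image_representation[where A = "{..<d}" and x = "f d" and f = f] by auto
    with no_recurrence show False by blast
  qed
  have independent: "independent (f ` {..<n})" for n
  proof (induction n)
    case (Suc n)
    then show ?case using new[of n] by (simp add: lessThan_Suc independent_insertI)
  qed (simp add: independent_empty)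
  have "inj_on f {..<n}" for n
  proof (rule inj_onI)
    have "f i \<noteq> f j" if "i < j" for i j
      using new[of j] span_base[of "f i" "f ` {..<j}"] that by auto
    then show "f i = f j \<Longrightarrow> i = j" for i j by (metis linorder_neqE_nat)
  qed
  then have "card (f ` {..<Suc (card B)}) = Suc (card B)"
    by (simp add: card_image)
  moreover have "card (f ` {..<Suc (card B)}) \<le> card B"
    using independent_span_bound[OF B independent] f by blast
  ultimately show False by simp
qed

lemma state_zero: "is_state cs st \<omega> \<Longrightarrow> \<omega> 0 = 0"
  unfolding is_state_def by (metis add_cancel_right_right add_0)

lemma state_add: "is_state cs st \<omega> \<Longrightarrow> \<omega> (a + b) = \<omega> a + \<omega> b"
  unfolding is_state_def by blast

lemma state_diff: "is_state cs st \<omega> \<Longrightarrow> \<omega> (a - b) = \<omega> a - \<omega> b"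
  by (metis add_diff_cancel diff_add_cancel state_add)

lemma state_sum: "is_state cs st \<omega> \<Longrightarrow> \<omega> (sum f S) = (\<Sum>x\<in>S. \<omega> (f x))"
  by (induction S rule: infinite_finite_induct) (simp_all add: state_zero state_add)

lemma state_scale: "is_state cs st \<omega> \<Longrightarrow> \<omega> (cs c a) = c * \<omega> a"
  unfolding is_state_def by blast

lemma state_one: "is_state cs st \<omega> \<Longrightarrow> \<omega> 1 = 1"
  unfolding is_state_def by blast

lemma state_nonneg: "is_state cs st \<omega> \<Longrightarrow> 0 \<le> \<omega> (st a * a)"
  unfolding is_state_def by (simp add: less_eq_complex_def)

sublocale quasi_local_cstar \<subseteq> V: vector_space csmult
  by unfold_locales (simp_all add: smult_add_right smult_add_left smult_assoc
      smult_of_real[of 1, simplified])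

context quasi_local_cstar
begin

lemma star_zero [simp]: "star 0 = 0"
  using star_add[of 0 0] by simp

lemma star_one [simp]: "star 1 = 1"
  using star_mult[of "star 1" 1] by (simp add: star_star)

lemma star_diff: "star (a - b) = star a - star b"
  by (metis add_diff_cancel diff_add_cancel star_add)

lemma star_sum: "star (sum f S) = (\<Sum>x\<in>S. star (f x))"
  by (induction S rule: infinite_finite_induct) (simp_all add: star_add)

lemma star_power: "star (a ^ n) = star a ^ n"
  by (induction n) (simp_all add: star_mult power_commutes)

lemma norm_star [simp]: "norm (star a) = norm a"
proof -
  have le: "norm a \<le> norm (star a)" for a
  proof (cases "a = 0")
    case False
    have "(norm a)\<^sup>2 = norm (star a * a)" by (simp add: cstar_identity)
    also have "\<dots> \<le> norm (star a) * norm a" by (rule norm_mult_ineq)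
    finally show ?thesis using False by (simp add: power2_eq_square)
  qed simp
  show ?thesis using le[of a] le[of "star a"] by (simp add: star_star)
qed

lemma iota_zero [simp]: "iota x 0 = 0"
  using iota_add[of x 0 0] by simp

lemma iota_diff: "iota x (a - b) = iota x a - iota x b"
  by (metis add_diff_cancel diff_add_cancel iota_add)

lemma iota_sum: "iota x (sum f S) = (\<Sum>y\<in>S. iota x (f y))"
  by (induction S rule: infinite_finite_induct) (simp_all add: iota_add)

lemma iota_power: "iota x (a ^ n) = iota x a ^ n"
  by (induction n) (simp_all add: iota_mult iota_one)

lemma iota_iota: "iota x (iota y a) = iota (x + y) a"
  using iota_comp[of x y] by (metis comp_apply)

lemma power_linear_recurrence:
  assumes X: "finite X" and h: "h \<in> Ob X"
  shows "\<exists>d c. h ^ d = (\<Sum>i<d. csmult (c i) (h ^ i))"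
proof -
  obtain B where B: "finite B" "Ob X = {\<Sum>b\<in>B. csmult (c b) b | c. True}"
    using O_findim[OF X] by blast
  have "h ^ i \<in> V.span B" for i
  proof -
    have "h ^ i \<in> Ob X"
      by (induction i) (simp_all add: O_one O_mult X h)
    then obtain c where "h ^ i = (\<Sum>b\<in>B. csmult (c b) b)" using B(2) by blast
    then show ?thesis by (simp add: V.span_sum V.span_scale V.span_base)
  qed
  then show ?thesis by (rule V.linear_recurrence_if_in_finite_span[OF B(1)])
qed

lemma norm_power_le_of_linear_recurrence:
  assumes rec: "k ^ d = (\<Sum>i<d. csmult (c i) (k ^ i))"
  shows "norm (k ^ n) \<le> (1 + (\<Sum>i<d. cmod (c i))) ^ n * max 1 (norm k) ^ (d - 1)"
proof (induction n rule: less_induct)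
  case (less n)
  define B where "B = 1 + (\<Sum>i<d. cmod (c i))"
  define u where "u = max 1 (norm k)"
  have B: "B \<ge> 1" and u: "u \<ge> 1" by (simp_all add: B_def u_def sum_nonneg)
  show ?case
  proof (cases "n < d")
    case True
    have "norm (k ^ n) \<le> u ^ n"
      using norm_power_ineq[of k n] power_mono[of "norm k" u n] by (simp add: u_def)
    also have "\<dots> \<le> u ^ (d - 1)"
      using True u by (intro power_increasing) auto
    also have "\<dots> \<le> B ^ n * u ^ (d - 1)"
      using B u by simp
    finally show ?thesis unfolding B_def u_def .
  next
    case False
    have "k ^ n = k ^ (n - d) * k ^ d" using False by (simp flip: power_add)
    also have "\<dots> = (\<Sum>i<d. csmult (c i) (k ^ (n - d + i)))"
      by (simp add: rec sum_distrib_left smult_mult_right[symmetric] power_add)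
    finally have "norm (k ^ n) \<le> (\<Sum>i<d. norm (csmult (c i) (k ^ (n - d + i))))"
      by (simp add: norm_sum)
    also have "\<dots> = (\<Sum>i<d. cmod (c i) * norm (k ^ (n - d + i)))"
      by (simp add: norm_smult)
    also have "\<dots> \<le> (\<Sum>i<d. cmod (c i) * (B ^ (n - 1) * u ^ (d - 1)))"
    proof (intro sum_mono mult_left_mono)
      fix i assume i: "i \<in> {..<d}"
      have "norm (k ^ (n - d + i)) \<le> B ^ (n - d + i) * u ^ (d - 1)"
        using less[of "n - d + i"] i False unfolding B_def u_def by simp
      also have "\<dots> \<le> B ^ (n - 1) * u ^ (d - 1)"
        using B u i False by (intro mult_right_mono power_increasing) auto
      finally show "norm (k ^ (n - d + i)) \<le> B ^ (n - 1) * u ^ (d - 1)" .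
    qed simp
    also have "\<dots> \<le> B * B ^ (n - 1) * u ^ (d - 1)"
      using B u by (simp add: B_def sum_distrib_right[symmetric] mult.assoc mult_right_mono)
    also have "B * B ^ (n - 1) = B ^ n"
      using False by (cases n) (auto simp: B_def)
    finally show ?thesis unfolding B_def u_def .
  qed
qed

lemma norm_power_two_power_selfadjoint:
  assumes "star k = k"
  shows "norm (k ^ 2 ^ j) = norm k ^ 2 ^ j"
proof (induction j)
  case (Suc j)
  have "k ^ 2 ^ Suc j = star (k ^ 2 ^ j) * k ^ 2 ^ j"
    by (simp add: star_power assms mult_2 flip: power_add)
  then have "norm (k ^ 2 ^ Suc j) = (norm (k ^ 2 ^ j))\<^sup>2" by (simp add: cstar_identity)
  then show ?case using Suc by (simp add: mult.commute flip: power_mult)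
qed simp

text \<open>The C*-identity gives norm (k ^ 2^j) = norm k ^ 2^j, while the recurrence lets
  norm (k ^ n) grow at most like B ^ n; comparing the two at n = 2^(d+1) bounds norm k.\<close>

lemma norm_selfadjoint_le_of_linear_recurrence:
  assumes sa: "star k = k" and rec: "k ^ d = (\<Sum>i<d. csmult (c i) (k ^ i))"
  shows "norm k \<le> (1 + (\<Sum>i<d. cmod (c i)))\<^sup>2"
proof (cases "norm k \<le> 1")
  case True
  then show ?thesis by (smt (verit) one_le_power sum_nonneg norm_ge_zero)
next
  case False
  define B where "B = 1 + (\<Sum>i<d. cmod (c i))"
  define M :: nat where "M = 2 ^ d"
  have B: "B \<ge> 1" by (simp add: B_def sum_nonneg)
  have "d - 1 \<le> M" unfolding M_def
    by (metis diff_le_self less_exp order.strict_implies_order order.trans)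
  have "norm k ^ (2 * M) = norm (k ^ 2 ^ Suc d)"
    using norm_power_two_power_selfadjoint[OF sa, of "Suc d"] by (simp add: M_def)
  also have "\<dots> \<le> B ^ (2 * M) * norm k ^ (d - 1)"
    using norm_power_le_of_linear_recurrence[OF rec, of "2 ^ Suc d"] False by (simp add: B_def M_def)
  also have "\<dots> \<le> B ^ (2 * M) * norm k ^ M"
    using False \<open>d - 1 \<le> M\<close> B by (intro mult_left_mono power_increasing) auto
  finally have "norm k ^ M * norm k ^ M \<le> (B\<^sup>2) ^ M * norm k ^ M"
    by (simp add: mult_2 power_add flip: power_mult)
  moreover have "norm k ^ M > 0"
    using False by (intro zero_less_power) linarith
  ultimately have "norm k ^ M \<le> (B\<^sup>2) ^ M"
    by (rule mult_right_le_imp_le)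
  then have "norm k ^ Suc (M - 1) \<le> (B\<^sup>2) ^ Suc (M - 1)"
    by (simp add: M_def)
  then have "norm k \<le> B\<^sup>2"
    by (rule power_le_imp_le_base) (use B in simp)
  then show ?thesis unfolding B_def .
qed

lemma bounded_translates:
  assumes "A \<in> obs Ob"
  obtains K where "\<And>x. norm (iota x A) \<le> K"
proof -
  obtain X where X: "finite X" "A \<in> Ob X" using assms unfolding obs_def by blast
  obtain d c where rec: "(star A * A) ^ d = (\<Sum>i<d. csmult (c i) ((star A * A) ^ i))"
    using power_linear_recurrence[OF X(1)] X by (meson O_mult O_star)
  define B where "B = 1 + (\<Sum>i<d. cmod (c i))"
  have "norm (iota x A) \<le> B" for x
  proof -
    define k where "k = star (iota x A) * iota x A"
    have sa: "star k = k" by (simp add: k_def star_mult star_star)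
    have "k ^ d = iota x ((star A * A) ^ d)"
      by (simp add: k_def iota_power iota_mult iota_star)
    then have "k ^ d = (\<Sum>i<d. csmult (c i) (k ^ i))"
      by (simp add: rec iota_sum iota_smult k_def iota_power iota_mult iota_star)
    then have "(norm (iota x A))\<^sup>2 \<le> B\<^sup>2"
      using norm_selfadjoint_le_of_linear_recurrence[OF sa] by (simp add: k_def B_def cstar_identity)
    then show ?thesis by (simp add: B_def power2_le_iff_abs_le sum_nonneg add_nonneg_nonneg)
  qed
  then show thesis by (rule that)
qed

lemma supp_least:
  assumes "A \<in> obs Ob"
  shows "finite (supp Ob A) \<and> A \<in> Ob (supp Ob A) \<and> (\<forall>Y. finite Y \<and> A \<in> Ob Y \<longrightarrow> supp Ob A \<subseteq> Y)"
proof -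
  obtain X where X: "finite X" "A \<in> Ob X" using assms unfolding obs_def by blast
  obtain Y0 where Y0: "Y0 \<subseteq> X" "A \<in> Ob Y0" and min_card: "\<And>Y. Y \<subseteq> X \<Longrightarrow> A \<in> Ob Y \<Longrightarrow> card Y0 \<le> card Y"
    using ex_has_least_nat[of "\<lambda>Y. Y \<subseteq> X \<and> A \<in> Ob Y" X card] X by blast
  have fin: "finite Y0" using Y0 X finite_subset by blast
  have least: "Y0 \<subseteq> Y" if "finite Y" "A \<in> Ob Y" for Y
  proof -
    have "A \<in> Ob (Y0 \<inter> Y)" using O_inter[OF fin that(1)] Y0 that by blast
    then have "card Y0 \<le> card (Y0 \<inter> Y)" using Y0 min_card by blast
    then have "Y0 \<inter> Y = Y0" using fin by (meson Int_lower1 card_seteq)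
    then show ?thesis by blast
  qed
  have P: "finite Y0 \<and> A \<in> Ob Y0 \<and> (\<forall>Y. finite Y \<and> A \<in> Ob Y \<longrightarrow> Y0 \<subseteq> Y)"
    using fin Y0 least by blast
  have "supp Ob A = Y0" unfolding supp_def
  proof (rule the_equality)
    fix Z assume "finite Z \<and> A \<in> Ob Z \<and> (\<forall>Y. finite Y \<and> A \<in> Ob Y \<longrightarrow> Z \<subseteq> Y)"
    then show "Z = Y0" using P by blast
  qed (rule P)
  then show ?thesis using P by simp
qed

lemma supp_star: "supp Ob (star A) = supp Ob A"
proof -
  have "star A \<in> Ob Y \<longleftrightarrow> A \<in> Ob Y" if "finite Y" for Y
    by (metis O_star star_star that)
  then show ?thesis unfolding supp_def by (intro arg_cong[where f = The]) (auto simp: fun_eq_iff)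
qed

lemma obs_star: "A \<in> obs Ob \<Longrightarrow> star A \<in> obs Ob"
  unfolding obs_def using O_star by blast

lemma star_translate_obs_supp:
  assumes "A \<in> obs Ob"
  shows "star (iota x A) \<in> obs Ob \<and> supp Ob (star (iota x A)) = (\<lambda>y. y + x) ` supp Ob A"
  using iota_supp[OF assms] obs_star by (simp add: supp_star)

lemma supp_dist_translate_ge:
  assumes "A \<in> obs Ob" "supp Ob A \<noteq> {}"
  shows "l1norm x - int (l1diam (supp Ob A)) \<le> int (supp_dist Ob (star (iota x A)) A)"
  using Min_l1dist_translate_ge[of "supp Ob A" x] supp_least[OF assms(1)] assms(2)
  unfolding supp_dist_def star_translate_obs_supp[OF assms(1), THEN conjunct2] by simp

lemma covariance_eq_recentred:
  fixes \<omega> :: "'a \<Rightarrow> complex" and A :: 'a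
  assumes st: "is_state csmult star \<omega>" and inv: "\<And>x a. \<omega> (iota x a) = \<omega> a"
  defines "A\<^sub>0 \<equiv> A - csmult (\<omega> A) 1"
  shows "\<omega> (star (iota x A) * A) - \<omega> (star A) * \<omega> A = \<omega> (star (iota x A\<^sub>0) * A\<^sub>0)"
proof -
  define c where "c = \<omega> A"
  define P where "P = star (iota x A)"
  have "star (iota x A\<^sub>0) = P - csmult (cnj c) 1"
    by (simp add: A\<^sub>0_def P_def c_def iota_diff iota_smult iota_one star_diff star_smult)
  then have "star (iota x A\<^sub>0) * A\<^sub>0 = (P - csmult (cnj c) 1) * (A - csmult c 1)"
    by (simp add: A\<^sub>0_def c_def)
  moreover have "P * csmult c 1 = csmult c P" by (metis smult_mult_right mult_1_right)
  moreover have "csmult (cnj c) 1 * A = csmult (cnj c) A" by (metis smult_mult_left mult_1_left)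
  moreover have "csmult (cnj c) 1 * csmult c 1 = csmult (cnj c * c) 1"
    by (metis smult_mult_left mult_1_left smult_assoc)
  ultimately have "star (iota x A\<^sub>0) * A\<^sub>0 = P * A - csmult c P - csmult (cnj c) A + csmult (cnj c * c) 1"
    by (simp add: algebra_simps)
  then have "\<omega> (star (iota x A\<^sub>0) * A\<^sub>0) = \<omega> (P * A) - c * \<omega> P - cnj c * \<omega> A + cnj c * c"
    by (simp add: state_add[OF st] state_diff[OF st] state_scale[OF st] state_one[OF st])
  moreover have "\<omega> P = \<omega> (star A)" by (simp add: P_def inv flip: iota_star)
  ultimately show ?thesis by (simp add: P_def c_def algebra_simps)
qed

lemma state_star_sum_translates:
  fixes \<omega> :: "'a \<Rightarrow> complex"
  assumes st: "is_state csmult star \<omega>" and inv: "\<And>x a. \<omega> (iota x a) = \<omega> a"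
  shows "\<omega> (star (\<Sum>x\<in>L. iota x B) * (\<Sum>x\<in>L. iota x B)) = Gram_sum (\<lambda>z. \<omega> (star (iota z B) * B)) L"
proof -
  have "star (iota x B) * iota y B = iota y (star (iota (x - y) B) * B)" for x y
    by (simp add: iota_mult iota_star iota_iota)
  then have "\<omega> (star (\<Sum>x\<in>L. iota x B) * (\<Sum>x\<in>L. iota x B))
      = (\<Sum>x\<in>L. \<Sum>y\<in>L. \<omega> (star (iota (x - y) B) * B))"
    by (simp add: star_sum sum_product state_sum[OF st] inv)
  also have "\<dots> = Gram_sum (\<lambda>z. \<omega> (star (iota z B) * B)) L"
    unfolding Gram_sum_def by (rule sum.swap)
  finally show ?thesis .
qed

lemma covariance_decay:
  fixes \<omega> :: "'a \<Rightarrow> complex"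
  assumes cs: "clustering_state csmult star Ob iota \<omega>" and A: "A \<in> obs Ob" "supp Ob A \<noteq> {}"
  obtains C p R where "p > real CARD('d)"
    "\<And>x. R \<le> l1norm x \<Longrightarrow> cmod (\<omega> (star (iota x A) * A) - \<omega> (star A) * \<omega> A)
       \<le> C * (\<Prod>i\<in>UNIV. (1 + real_of_int \<bar>x$i\<bar>) powr (- p / CARD('d)))"
proof -
  obtain \<nu> :: "nat \<Rightarrow> real" and f :: "int \<Rightarrow> real" and p :: real where
    \<nu>: "\<forall>l. \<nu> l > 0" and f: "\<forall>d. f d > 0" and p: "p > real CARD('d)"
    and f_decay: "\<forall>d>0. f d \<le> real_of_int d powr (-p)"
    and cluster: "\<forall>l A B. A \<in> obs Ob \<and> B \<in> obs Ob \<and> card (supp Ob A) < l \<and> card (supp Ob B) < l \<and>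
            supp Ob A \<noteq> {} \<and> supp Ob B \<noteq> {} \<longrightarrow>
            cmod (\<omega> (A * B) - \<omega> A * \<omega> B) \<le> \<nu> l * norm A * norm B * f (int (supp_dist Ob A B))"
    using cs unfolding clustering_state_def by (elim conjE exE) (rule that, assumption+)
  have inv: "\<omega> (iota x a) = \<omega> a" for x a
    using cs unfolding clustering_state_def by blast
  obtain K where K: "\<And>x. norm (iota x A) \<le> K" using bounded_translates[OF A(1)] by blast
  have K_nonneg: "0 \<le> K" using K[of 0] norm_ge_zero order_trans by blast
  define S where "S = supp Ob A"
  define l where "l = card S + 1"
  define C where "C = \<nu> l * K * norm A * 4 powr p"
  have p0: "p > 0" using p by (smt (verit) of_nat_0_le_iff)
  show thesis
  \<comment> \<open>beyond this radius the supports of A and of its translate are at distance at least l1norm x / 2\<close>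
  proof (rule that[where C = C and R = "2 * int (l1diam S) + 1", OF p])
    fix x :: "int^'d" assume x: "2 * int (l1diam S) + 1 \<le> l1norm x"
    define B where "B = star (iota x A)"
    define dd where "dd = int (supp_dist Ob B A)"
    have B: "B \<in> obs Ob" "supp Ob B = (\<lambda>y. y + x) ` S"
      using star_translate_obs_supp[OF A(1)] by (simp_all add: B_def S_def)
    moreover have "card (supp Ob B) = card S"
      unfolding B(2) by (rule card_image) (simp add: inj_on_def)
    ultimately have "cmod (\<omega> (B * A) - \<omega> B * \<omega> A) \<le> \<nu> l * norm B * norm A * f dd"
      using cluster A unfolding l_def S_def dd_def by auto
    moreover have "\<omega> B = \<omega> (star A)" by (simp add: B_def inv flip: iota_star)
    ultimately have cov: "cmod (\<omega> (B * A) - \<omega> (star A) * \<omega> A) \<le> \<nu> l * norm B * norm A * f dd"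
      by simp
    have dd: "dd > 0" "real_of_int dd \<ge> l1norm x / 2"
      using supp_dist_translate_ge[OF A, of x] x by (simp_all add: dd_def B_def S_def)
    have "f dd \<le> real_of_int dd powr (-p)" using f_decay dd by blast
    also have "\<dots> \<le> 4 powr p * (\<Prod>i\<in>UNIV. (1 + real_of_int \<bar>x$i\<bar>) powr (-p / CARD('d)))"
      using powr_le_prod_powr_abs[OF p0 _ dd(2)] x by simp
    finally have "\<nu> l * norm B * norm A * f dd
        \<le> \<nu> l * K * norm A * (4 powr p * (\<Prod>i\<in>UNIV. (1 + real_of_int \<bar>x$i\<bar>) powr (-p / CARD('d))))"
      using \<nu> f K[of x] K_nonneg by (intro mult_mono mult_nonneg_nonneg) (auto simp: B_def less_imp_le)
    with cov show "cmod (\<omega> (star (iota x A) * A) - \<omega> (star A) * \<omega> A)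
        \<le> C * (\<Prod>i\<in>UNIV. (1 + real_of_int \<bar>x$i\<bar>) powr (- p / CARD('d)))"
      by (simp add: B_def C_def mult.assoc)
  qed
qed

lemma covariance_summable:
  fixes \<omega> :: "'a \<Rightarrow> complex"
  assumes cs: "clustering_state csmult star Ob iota \<omega>" and A: "A \<in> obs Ob"
  shows "(\<lambda>x. \<omega> (star (iota x A) * A) - \<omega> (star A) * \<omega> A) summable_on UNIV"
proof (cases "supp Ob A = {}")
  case True
  have st: "is_state csmult star \<omega>" and inv: "\<And>x a. \<omega> (iota x a) = \<omega> a"
    using cs unfolding clustering_state_def by auto
  obtain c where "A = csmult c 1"
    using supp_least[OF A] True O_empty by auto
  then have "A - csmult (\<omega> A) 1 = 0"
    by (simp add: state_scale[OF st] state_one[OF st])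
  then show ?thesis
    by (simp add: covariance_eq_recentred[OF st inv] state_zero[OF st])
next
  case False
  obtain C p R where p: "p > real CARD('d)" and bound: "\<And>x. R \<le> l1norm x \<Longrightarrow>
      cmod (\<omega> (star (iota x A) * A) - \<omega> (star A) * \<omega> A)
        \<le> C * (\<Prod>i\<in>UNIV. (1 + real_of_int \<bar>x$i\<bar>) powr (- p / CARD('d)))"
    using covariance_decay[OF cs A False] by blast
  have "(\<lambda>x::int^'d. \<Prod>i\<in>UNIV. (1 + real_of_int \<bar>x$i\<bar>) powr (- (p / CARD('d)))) summable_on UNIV"
    using p by (intro summable_on_prod_powr_abs_vec) (simp add: field_simps)
  then have "(\<lambda>x::int^'d. C * (\<Prod>i\<in>UNIV. (1 + real_of_int \<bar>x$i\<bar>) powr (- p / CARD('d))))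
      summable_on UNIV"
    by (intro summable_on_cmult_right) simp
  then show ?thesis
    by (rule summable_on_if_norm_bounded_off_finite[OF finite_l1norm_le[of R]]) (use bound in auto)
qed

end

theorem theorem4p5:
  fixes csmult :: "complex \<Rightarrow> 'a::{real_normed_algebra_1, banach} \<Rightarrow> 'a"
    and star :: "'a \<Rightarrow> 'a"
    and Ob :: "(int^'d) set \<Rightarrow> 'a set"
    and iota :: "int^'d \<Rightarrow> 'a \<Rightarrow> 'a"
    and \<omega> :: "'a \<Rightarrow> complex"
  assumes "quasi_local_cstar csmult star Ob iota"
    and "clustering_state csmult star Ob iota \<omega>"
    and "A \<in> obs Ob"
  shows "(\<lambda>x. \<omega> (star (iota x A) * A) - \<omega> (star A) * \<omega> A) summable_on UNIV
    \<and> Im (\<Sum>\<^sub>\<infinity>x. \<omega> (star (iota x A) * A) - \<omega> (star A) * \<omega> A) = 0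
    \<and> Re (\<Sum>\<^sub>\<infinity>x. \<omega> (star (iota x A) * A) - \<omega> (star A) * \<omega> A) \<ge> 0"
proof -
  interpret quasi_local_cstar csmult star Ob iota by (fact assms(1))
  have st: "is_state csmult star \<omega>" and inv: "\<And>x a. \<omega> (iota x a) = \<omega> a"
    using assms(2) unfolding clustering_state_def by auto
  let ?cov = "\<lambda>x. \<omega> (star (iota x A) * A) - \<omega> (star A) * \<omega> A"
  define A\<^sub>0 where "A\<^sub>0 = A - csmult (\<omega> A) 1"
  have summable: "?cov summable_on UNIV"
    using covariance_summable[OF assms(2,3)] .
  have "0 \<le> infsum ?cov UNIV"
  proof (rule infsum_nonneg_if_Gram_sums_nonneg[OF summable])
    fix L :: "(int^'d) set"
    have "Gram_sum ?cov L = \<omega> (star (\<Sum>x\<in>L. iota x A\<^sub>0) * (\<Sum>x\<in>L. iota x A\<^sub>0))"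
      by (simp add: covariance_eq_recentred[OF st inv] state_star_sum_translates[OF st inv] A\<^sub>0_def)
    then show "0 \<le> Gram_sum ?cov L" by (simp add: state_nonneg[OF st])
  qed
  with summable show ?thesis by (simp add: less_eq_complex_def)
qed

end
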